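(* Let $H$ and $G$ be as in the construction described in the context. If $H$ is a solvable group of length $l$, then $G$ is a solvable group of length $l+2$.
   Context: Construction: $H$ is a group generated by a countable set $\{a^{(1)},a^{(2)},\ldots\}$. For groups $A,B$, the wreath product $A\,\mathrm{Wr}\,B$ is the semidirect product $A^B\rtimes B$, where $A^B$ is the group of all functions $B\to A$ with pointwise multiplication and $B$ acts by $(bf)(x)=f(xb)$. Let $Z=\langle z\rangle$ be infinite cyclic and let $b^{(i)}\in H^Z$ be given by $b^{(i)}(z^k)=a^{(i)}$ if $k>0$ and $b^{(i)}(z^k)=1$ otherwise. Let $K=\langle z,b^{(i)}\ (i\in\mathbb{N})\rangle\le H\,\mathrm{Wr}\,Z$. Let $\langle s\rangle$ be infinite cyclic and let $c\in K^{\langle s\rangle}$ be given by $c(s)=z$, $c(s^{2^i})=b^{(i)}$ for $i>0$, and $c(s^k)=1$ otherwise. Let $G=\langle c,s\rangle\le K\,\mathrm{Wr}\,\langle s\rangle$. *)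

theory Defs
  imports "HOL-Algebra.Algebra"
begin

text \<open>Unrestricted wreath product A Wr B = A^B \<rtimes> B, with B acting on A^B by
  (b f)(x) = f(x b).\<close>
definition wreath :: "('a,'m) monoid_scheme \<Rightarrow> ('b,'n) monoid_scheme \<Rightarrow> (('b \<Rightarrow> 'a) \<times> 'b) monoid"
  where "wreath A B =
    \<lparr> carrier = (carrier B \<rightarrow>\<^sub>E carrier A) \<times> carrier B,
      monoid.mult = (\<lambda>(f1, b1) (f2, b2).
                (\<lambda>x\<in>carrier B. f1 x \<otimes>\<^bsub>A\<^esub> f2 (x \<otimes>\<^bsub>B\<^esub> b1), b1 \<otimes>\<^bsub>B\<^esub> b2)),
      one = (\<lambda>x\<in>carrier B. \<one>\<^bsub>A\<^esub>, \<one>\<^bsub>B\<^esub>) \<rparr>"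

definition solvable_length :: "('a,'b) monoid_scheme \<Rightarrow> nat \<Rightarrow> bool"
  where "solvable_length G n \<longleftrightarrow>
     (derived G ^^ n) (carrier G) = {\<one>\<^bsub>G\<^esub>} \<and>
     (\<forall>m<n. (derived G ^^ m) (carrier G) \<noteq> {\<one>\<^bsub>G\<^esub>})"

text \<open>Infinite cyclic groups Z = <z> and <s> are modelled by integer_group
  (z^k corresponds to k).  H Wr Z:\<close>
abbreviation HWrZ :: "('h,'m) monoid_scheme \<Rightarrow> ((int \<Rightarrow> 'h) \<times> int) monoid"
  where "HWrZ H \<equiv> wreath H integer_group"

definition zelt :: "('h,'m) monoid_scheme \<Rightarrow> (int \<Rightarrow> 'h) \<times> int"
  where "zelt H = (\<lambda>k\<in>UNIV. \<one>\<^bsub>H\<^esub>, 1)"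

definition belt :: "('h,'m) monoid_scheme \<Rightarrow> (nat \<Rightarrow> 'h) \<Rightarrow> nat \<Rightarrow> (int \<Rightarrow> 'h) \<times> int"
  where "belt H a i = (\<lambda>k\<in>UNIV. if k > 0 then a i else \<one>\<^bsub>H\<^esub>, 0)"

definition Kgrp :: "('h,'m) monoid_scheme \<Rightarrow> (nat \<Rightarrow> 'h) \<Rightarrow> ((int \<Rightarrow> 'h) \<times> int) monoid"
  where "Kgrp H a = subgroup_generated (HWrZ H) ({zelt H} \<union> belt H a ` {1..})"

definition cfun :: "('h,'m) monoid_scheme \<Rightarrow> (nat \<Rightarrow> 'h) \<Rightarrow> int \<Rightarrow> (int \<Rightarrow> 'h) \<times> int"
  where "cfun H a = (\<lambda>k\<in>UNIV.
     if k = 1 then zelt H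
     else if (\<exists>i::nat. i > 0 \<and> k = 2 ^ i) then belt H a (THE i. i > 0 \<and> k = 2 ^ i)
     else \<one>\<^bsub>HWrZ H\<^esub>)"

abbreviation KWrS :: "('h,'m) monoid_scheme \<Rightarrow> (nat \<Rightarrow> 'h)
    \<Rightarrow> ((int \<Rightarrow> (int \<Rightarrow> 'h) \<times> int) \<times> int) monoid"
  where "KWrS H a \<equiv> wreath (Kgrp H a) integer_group"

definition celt :: "('h,'m) monoid_scheme \<Rightarrow> (nat \<Rightarrow> 'h) \<Rightarrow> (int \<Rightarrow> (int \<Rightarrow> 'h) \<times> int) \<times> int"
  where "celt H a = (cfun H a, 0)"

definition selt :: "('h,'m) monoid_scheme \<Rightarrow> (nat \<Rightarrow> 'h) \<Rightarrow> (int \<Rightarrow> (int \<Rightarrow> 'h) \<times> int) \<times> int"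
  where "selt H a = (\<lambda>k\<in>UNIV. \<one>\<^bsub>Kgrp H a\<^esub>, 1)"

definition Ggrp :: "('h,'m) monoid_scheme \<Rightarrow> (nat \<Rightarrow> 'h)
    \<Rightarrow> ((int \<Rightarrow> (int \<Rightarrow> 'h) \<times> int) \<times> int) monoid"
  where "Ggrp H a = subgroup_generated (KWrS H a) {celt H a, selt H a}"

end

theory Submission
  imports Defs
begin

(*
  Upper bound: in A Wr Z every commutator has trivial Z-coordinate and commutators of base
  elements are computed pointwise, so the (n+1)-st derived subgroup of A Wr Z consists of
  functions Z -> D^n(A). Applied to G <= K Wr <s> and K <= H Wr Z this gives D^(l+2)(G) = 1.

  Lower bound: evaluating a base element at a point is a homomorphism, so evaluating at s and
  then at z^0 maps D^(n+2)(G) onto D^n(H). Surjectivity comes from the commutator of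
  x_i = [c, s^k c s^-k] (k = 2^i - 1) and y = [s, c], both in G': their coordinates at s are
  [z, b^(i)] and b^(1) z^-1, and the commutator of these has value a^(i) at z^0.
  Hence D^(l+1)(G) is nontrivial; for l = 0 the element y itself witnesses this.
*)

definition commutator :: "('a, 'b) monoid_scheme \<Rightarrow> 'a \<Rightarrow> 'a \<Rightarrow> 'a"
  where "commutator G g h = g \<otimes>\<^bsub>G\<^esub> h \<otimes>\<^bsub>G\<^esub> inv\<^bsub>G\<^esub> g \<otimes>\<^bsub>G\<^esub> inv\<^bsub>G\<^esub> h"

lemma commutator_in_derived: "g \<in> S \<Longrightarrow> h \<in> S \<Longrightarrow> commutator G g h \<in> derived G S"
  unfolding derived_def commutator_def by (blast intro: generate.incl)

lemma (in group) commutator_closed [intro, simp]: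
  "g \<in> carrier G \<Longrightarrow> h \<in> carrier G \<Longrightarrow> commutator G g h \<in> carrier G"
  by (simp add: commutator_def)

lemma (in group) derived_subset_subgroup:
  assumes "subgroup T G" "\<And>g h. g \<in> S \<Longrightarrow> h \<in> S \<Longrightarrow> commutator G g h \<in> T"
  shows "derived G S \<subseteq> T"
  unfolding derived_def
  by (rule generate_subgroup_incl[OF _ assms(1)]) (use assms(2) in \<open>auto simp: commutator_def\<close>)

lemma (in group) exp_of_derived_consistent:
  assumes "subgroup T G" "S \<subseteq> T"
  shows "(derived (G\<lparr>carrier := T\<rparr>) ^^ n) S = (derived G ^^ n) S"
proof (induction n)
  case (Suc n)
  have "(derived G ^^ n) S \<subseteq> T"
    using assms derived_incl by (induction n) auto
  then show ?case using Suc derived_consistent[OF _ assms(1)] by simp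
qed simp

lemma (in group) exp_of_derived_antimono:
  assumes "subgroup S G" "m \<le> n"
  shows "(derived G ^^ n) S \<subseteq> (derived G ^^ m) S"
  using assms(2)
proof (induction n rule: dec_induct)
  case (step n)
  then show ?case
    using derived_incl[OF _ exp_of_derived_is_subgroup[OF assms(1)]] by fastforce
qed simp

lemma wreath_mult:
  "p \<otimes>\<^bsub>wreath A B\<^esub> q =
     (\<lambda>x\<in>carrier B. fst p x \<otimes>\<^bsub>A\<^esub> fst q (x \<otimes>\<^bsub>B\<^esub> snd p), snd p \<otimes>\<^bsub>B\<^esub> snd q)"
  by (cases p, cases q) (simp add: wreath_def)

lemma wreath_one: "\<one>\<^bsub>wreath A B\<^esub> = (\<lambda>x\<in>carrier B. \<one>\<^bsub>A\<^esub>, \<one>\<^bsub>B\<^esub>)"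
  by (simp add: wreath_def)

lemma mem_carrier_wreath:
  "p \<in> carrier (wreath A B) \<longleftrightarrow> fst p \<in> carrier B \<rightarrow>\<^sub>E carrier A \<and> snd p \<in> carrier B"
  by (cases p) (simp add: wreath_def)

lemma group_wreath:
  assumes "group A" "group B"
  shows "group (wreath A B)"
proof -
  interpret A: group A by fact
  interpret B: group B by fact
  show ?thesis
  proof (rule groupI)
    fix p q assume "p \<in> carrier (wreath A B)" "q \<in> carrier (wreath A B)"
    then show "p \<otimes>\<^bsub>wreath A B\<^esub> q \<in> carrier (wreath A B)"
      by (auto simp: mem_carrier_wreath wreath_mult)
  next
    show "\<one>\<^bsub>wreath A B\<^esub> \<in> carrier (wreath A B)"
      by (simp add: mem_carrier_wreath wreath_one)
  next
    fix p q r
    assume "p \<in> carrier (wreath A B)" "q \<in> carrier (wreath A B)" "r \<in> carrier (wreath A B)"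
    then show "p \<otimes>\<^bsub>wreath A B\<^esub> q \<otimes>\<^bsub>wreath A B\<^esub> r = p \<otimes>\<^bsub>wreath A B\<^esub> (q \<otimes>\<^bsub>wreath A B\<^esub> r)"
      by (auto simp: mem_carrier_wreath wreath_mult A.m_assoc B.m_assoc PiE_iff intro!: restrict_ext)
  next
    fix p assume "p \<in> carrier (wreath A B)"
    then show "\<one>\<^bsub>wreath A B\<^esub> \<otimes>\<^bsub>wreath A B\<^esub> p = p"
      by (cases p) (auto simp: mem_carrier_wreath wreath_mult wreath_one PiE_iff extensional_def fun_eq_iff)
  next
    fix p assume p: "p \<in> carrier (wreath A B)"
    show "\<exists>q\<in>carrier (wreath A B). q \<otimes>\<^bsub>wreath A B\<^esub> p = \<one>\<^bsub>wreath A B\<^esub>"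
    proof (intro bexI)
      show "(\<lambda>x\<in>carrier B. inv\<^bsub>A\<^esub> fst p (x \<otimes>\<^bsub>B\<^esub> inv\<^bsub>B\<^esub> snd p), inv\<^bsub>B\<^esub> snd p)
              \<otimes>\<^bsub>wreath A B\<^esub> p = \<one>\<^bsub>wreath A B\<^esub>"
        using p by (auto simp: mem_carrier_wreath wreath_mult wreath_one PiE_iff B.m_assoc intro!: restrict_ext)
    qed (use p in \<open>auto simp: mem_carrier_wreath PiE_mem\<close>)
  qed
qed

lemma inv_wreath:
  assumes "group A" "group B" "p \<in> carrier (wreath A B)"
  shows "inv\<^bsub>wreath A B\<^esub> p =
           (\<lambda>x\<in>carrier B. inv\<^bsub>A\<^esub> fst p (x \<otimes>\<^bsub>B\<^esub> inv\<^bsub>B\<^esub> snd p), inv\<^bsub>B\<^esub> snd p)"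
proof -
  interpret A: group A by fact
  interpret B: group B by fact
  interpret W: group "wreath A B" using group_wreath assms by blast
  show ?thesis
    using assms(3)
    by (intro W.inv_equality)
      (auto simp: mem_carrier_wreath wreath_mult wreath_one PiE_iff B.m_assoc intro!: restrict_ext)
qed

definition wreath_base ::
    "('a,'m) monoid_scheme \<Rightarrow> ('b,'n) monoid_scheme \<Rightarrow> 'a set \<Rightarrow> (('b \<Rightarrow> 'a) \<times> 'b) set"
  where "wreath_base A B Y =
    {p \<in> carrier (wreath A B). snd p = \<one>\<^bsub>B\<^esub> \<and> (\<forall>x\<in>carrier B. fst p x \<in> Y)}"

lemma wreath_base_mono: "Y \<subseteq> Z \<Longrightarrow> wreath_base A B Y \<subseteq> wreath_base A B Z"
  by (auto simp: wreath_base_def)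

lemma wreath_base_one_subset: "wreath_base A B {\<one>\<^bsub>A\<^esub>} \<subseteq> {\<one>\<^bsub>wreath A B\<^esub>}"
  by (auto simp: wreath_base_def wreath_one mem_carrier_wreath PiE_iff extensional_def fun_eq_iff)

lemma subgroup_wreath_base:
  assumes "group A" "group B" "subgroup Y A"
  shows "subgroup (wreath_base A B Y) (wreath A B)"
proof -
  interpret A: group A by fact
  interpret B: group B by fact
  interpret W: group "wreath A B" using group_wreath assms by blast
  interpret Y: subgroup Y A by fact
  show ?thesis
  proof (rule W.subgroupI)
    show "wreath_base A B Y \<noteq> {}"
      using W.one_closed by (auto simp: wreath_base_def wreath_one)
  next
    fix p assume "p \<in> wreath_base A B Y"
    then show "inv\<^bsub>wreath A B\<^esub> p \<in> wreath_base A B Y"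
      by (auto simp: wreath_base_def inv_wreath assms(1,2) mem_carrier_wreath PiE_iff)
  next
    fix p q assume "p \<in> wreath_base A B Y" "q \<in> wreath_base A B Y"
    then show "p \<otimes>\<^bsub>wreath A B\<^esub> q \<in> wreath_base A B Y"
      by (auto simp: wreath_base_def wreath_mult mem_carrier_wreath PiE_iff)
  qed (auto simp: wreath_base_def)
qed

lemma snd_commutator_wreath:
  assumes "group A" "comm_group B" "p \<in> carrier (wreath A B)" "q \<in> carrier (wreath A B)"
  shows "snd (commutator (wreath A B) p q) = \<one>\<^bsub>B\<^esub>"
proof -
  interpret B: comm_group B by fact
  have "snd p \<in> carrier B" "snd q \<in> carrier B"
    using assms(3,4) by (simp_all add: mem_carrier_wreath)
  then show ?thesis
    using assms by (simp add: commutator_def wreath_mult inv_wreath B.m_comm[of "snd p" "snd q"] B.m_assoc)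
qed

lemma commutator_wreath_base:
  assumes "group A" "group B" "p \<in> carrier (wreath A B)" "q \<in> carrier (wreath A B)"
    and "snd p = \<one>\<^bsub>B\<^esub>" "snd q = \<one>\<^bsub>B\<^esub>"
  shows "commutator (wreath A B) p q = (\<lambda>x\<in>carrier B. commutator A (fst p x) (fst q x), \<one>\<^bsub>B\<^esub>)"
proof -
  interpret B: group B by fact
  show ?thesis
    using assms by (auto simp: commutator_def wreath_mult inv_wreath mem_carrier_wreath PiE_iff)
qed

lemma derived_wreath_subset_base:
  assumes "group A" "comm_group B" "S \<subseteq> carrier (wreath A B)"
  shows "derived (wreath A B) S \<subseteq> wreath_base A B (carrier A)"
proof -
  interpret A: group A by fact
  interpret B: comm_group B by fact
  interpret W: group "wreath A B" using group_wreath assms by blast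
  show ?thesis
  proof (rule W.derived_subset_subgroup[OF subgroup_wreath_base[OF assms(1) B.is_group A.subgroup_self]])
    fix p q assume "p \<in> S" "q \<in> S"
    with assms(3) have "p \<in> carrier (wreath A B)" "q \<in> carrier (wreath A B)"
      by auto
    then have "commutator (wreath A B) p q \<in> carrier (wreath A B)"
      and "snd (commutator (wreath A B) p q) = \<one>\<^bsub>B\<^esub>"
      using snd_commutator_wreath[OF assms(1,2)] by simp_all
    then show "commutator (wreath A B) p q \<in> wreath_base A B (carrier A)"
      by (simp add: wreath_base_def mem_carrier_wreath PiE_iff)
  qed
qed

lemma derived_wreath_base:
  assumes "group A" "group B" "subgroup Y A" "S \<subseteq> wreath_base A B Y"
  shows "derived (wreath A B) S \<subseteq> wreath_base A B (derived A Y)"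
proof -
  interpret A: group A by fact
  interpret W: group "wreath A B" using group_wreath assms by blast
  show ?thesis
  proof (rule W.derived_subset_subgroup[OF subgroup_wreath_base[OF assms(1,2) A.derived_is_subgroup]])
    show "Y \<subseteq> carrier A" using subgroup.subset[OF assms(3)] .
  next
    fix p q assume "p \<in> S" "q \<in> S"
    with assms(4)
    have p: "p \<in> carrier (wreath A B)" "snd p = \<one>\<^bsub>B\<^esub>" "\<forall>x\<in>carrier B. fst p x \<in> Y"
      and q: "q \<in> carrier (wreath A B)" "snd q = \<one>\<^bsub>B\<^esub>" "\<forall>x\<in>carrier B. fst q x \<in> Y"
      by (auto simp: wreath_base_def)
    then show "commutator (wreath A B) p q \<in> wreath_base A B (derived A Y)"
      using W.commutator_closed[OF p(1) q(1)] commutator_in_derived[of _ Y _ A]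
      by (simp add: wreath_base_def commutator_wreath_base[OF assms(1,2)])
  qed
qed

lemma exp_of_derived_wreath_subset_base:
  assumes "group A" "comm_group B" "S \<subseteq> carrier (wreath A B)"
  shows "(derived (wreath A B) ^^ Suc n) S \<subseteq> wreath_base A B ((derived A ^^ n) (carrier A))"
proof (induction n)
  case 0
  show ?case using derived_wreath_subset_base[OF assms] by simp
next
  case (Suc n)
  interpret A: group A by fact
  interpret W: group "wreath A B" using group_wreath assms comm_group.axioms(2) by blast
  have "(derived (wreath A B) ^^ Suc (Suc n)) S
          \<subseteq> derived (wreath A B) (wreath_base A B ((derived A ^^ n) (carrier A)))"
    using W.mono_derived[OF Suc.IH] by simp
  also have "\<dots> \<subseteq> wreath_base A B ((derived A ^^ Suc n) (carrier A))"
    using derived_wreath_base[OF assms(1) comm_group.axioms(2)[OF assms(2)]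
        A.exp_of_derived_is_subgroup[OF A.subgroup_self]] by simp
  finally show ?case .
qed

lemma group_hom_wreath_base_eval:
  assumes "group A" "group B" "x \<in> carrier B"
  shows "group_hom ((wreath A B)\<lparr>carrier := wreath_base A B (carrier A)\<rparr>) A (\<lambda>p. fst p x)"
proof -
  interpret A: group A by fact
  interpret B: group B by fact
  interpret W: group "wreath A B" using group_wreath assms by blast
  have sub: "subgroup (wreath_base A B (carrier A)) (wreath A B)"
    by (rule subgroup_wreath_base[OF assms(1,2) A.subgroup_self])
  show ?thesis
  proof (intro group_hom.intro group_hom_axioms.intro homI)
    show "group ((wreath A B)\<lparr>carrier := wreath_base A B (carrier A)\<rparr>)"
      by (rule W.subgroup_imp_group[OF sub])
  qed (use assms(3) in \<open>auto simp: wreath_base_def wreath_mult\<close>)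
qed

lemma exp_of_derived_wreath_base_eval:
  assumes "group A" "group B" "x \<in> carrier B" "S \<subseteq> wreath_base A B (carrier A)"
  shows "(\<lambda>p. fst p x) ` (derived (wreath A B) ^^ n) S = (derived A ^^ n) ((\<lambda>p. fst p x) ` S)"
proof -
  interpret A: group A by fact
  interpret W: group "wreath A B" using group_wreath assms by blast
  interpret ev: group_hom "(wreath A B)\<lparr>carrier := wreath_base A B (carrier A)\<rparr>" A "\<lambda>p. fst p x"
    by (rule group_hom_wreath_base_eval[OF assms(1-3)])
  show ?thesis
    using ev.exp_of_derived_img[of S n] assms(4)
      W.exp_of_derived_consistent[OF subgroup_wreath_base[OF assms(1,2) A.subgroup_self] assms(4)]
    by simp
qed

lemma mem_carrier_wreath_int:
  "p \<in> carrier (wreath A integer_group) \<longleftrightarrow> (\<forall>x. fst p x \<in> carrier A)"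
  by (simp add: mem_carrier_wreath PiE_iff)

lemma wreath_int_mult:
  "p \<otimes>\<^bsub>wreath A integer_group\<^esub> q = (\<lambda>x. fst p x \<otimes>\<^bsub>A\<^esub> fst q (x + snd p), snd p + snd q)"
  by (simp add: wreath_mult restrict_UNIV)

lemma wreath_int_one: "\<one>\<^bsub>wreath A integer_group\<^esub> = (\<lambda>x. \<one>\<^bsub>A\<^esub>, 0)"
  by (simp add: wreath_one restrict_UNIV)

lemma inv_wreath_int:
  assumes "group A" "p \<in> carrier (wreath A integer_group)"
  shows "inv\<^bsub>wreath A integer_group\<^esub> p = (\<lambda>x. inv\<^bsub>A\<^esub> fst p (x - snd p), - snd p)"
  using inv_wreath[OF assms(1) group_integer_group assms(2)] by (simp add: restrict_UNIV)

locale wreath_tower =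
  fixes H :: "('h, 'm) monoid_scheme" and a :: "nat \<Rightarrow> 'h"
  assumes group_H: "group H"
    and a_in_carrier: "\<And>i. i \<ge> 1 \<Longrightarrow> a i \<in> carrier H"
begin

sublocale H: group H by (rule group_H)

sublocale HZ: group "HWrZ H" by (rule group_wreath[OF group_H group_integer_group])

lemma zelt_eq: "zelt H = (\<lambda>k. \<one>\<^bsub>H\<^esub>, 1)"
  by (simp add: zelt_def restrict_UNIV)

lemma belt_eq: "belt H a i = (\<lambda>k. if k > 0 then a i else \<one>\<^bsub>H\<^esub>, 0)"
  by (simp add: belt_def restrict_UNIV)

lemma Kgrp_generators_in_carrier: "{zelt H} \<union> belt H a ` {1..} \<subseteq> carrier (HWrZ H)"
  by (auto simp: zelt_eq belt_eq mem_carrier_wreath_int a_in_carrier)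

lemma carrier_Kgrp: "carrier (Kgrp H a) = generate (HWrZ H) ({zelt H} \<union> belt H a ` {1..})"
  using Kgrp_generators_in_carrier
  by (simp add: Kgrp_def carrier_subgroup_generated Int_absorb1)

lemma subgroup_Kgrp: "subgroup (carrier (Kgrp H a)) (HWrZ H)"
  unfolding carrier_Kgrp by (rule HZ.generate_is_subgroup[OF Kgrp_generators_in_carrier])

lemma Kgrp_eq: "Kgrp H a = (HWrZ H)\<lparr>carrier := carrier (Kgrp H a)\<rparr>"
  by (simp add: Kgrp_def subgroup_generated_def)

sublocale K: group "Kgrp H a"
  unfolding Kgrp_def by simp

lemma one_Kgrp [simp]: "\<one>\<^bsub>Kgrp H a\<^esub> = \<one>\<^bsub>HWrZ H\<^esub>"
  by (simp add: Kgrp_def)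

lemma mult_Kgrp [simp]: "x \<otimes>\<^bsub>Kgrp H a\<^esub> y = x \<otimes>\<^bsub>HWrZ H\<^esub> y"
  by (simp add: Kgrp_def)

lemma inv_Kgrp [simp]: "x \<in> carrier (Kgrp H a) \<Longrightarrow> inv\<^bsub>Kgrp H a\<^esub> x = inv\<^bsub>HWrZ H\<^esub> x"
  unfolding Kgrp_def by (rule HZ.inv_subgroup_generated) (simp add: Kgrp_def[symmetric])

lemma one_HWrZ_in_Kgrp [simp]: "\<one>\<^bsub>HWrZ H\<^esub> \<in> carrier (Kgrp H a)"
  using K.one_closed by simp

lemma zelt_in_Kgrp: "zelt H \<in> carrier (Kgrp H a)"
  unfolding carrier_Kgrp by (rule generate.incl) simp

lemma belt_in_Kgrp: "i \<ge> 1 \<Longrightarrow> belt H a i \<in> carrier (Kgrp H a)"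
  unfolding carrier_Kgrp by (rule generate.incl) simp

lemma carrier_Kgrp_subset: "carrier (Kgrp H a) \<subseteq> carrier (HWrZ H)"
  using subgroup.subset[OF subgroup_Kgrp] .

lemma cfun_1: "cfun H a 1 = zelt H"
  by (simp add: cfun_def)

lemma cfun_0: "cfun H a 0 = \<one>\<^bsub>HWrZ H\<^esub>"
  by (auto simp: cfun_def)

lemma cfun_power_of_two:
  assumes "i > 0"
  shows "cfun H a (2 ^ i) = belt H a i"
proof -
  have "(THE j. j > 0 \<and> (2::int) ^ i = 2 ^ j) = i"
    using assms by (intro the_equality) (auto dest: power_inject_exp[THEN iffD1, rotated])
  moreover have "(2::int) ^ i \<noteq> 1"
    using assms one_less_power[of "2::int" i] by linarith
  ultimately show ?thesis
    using assms by (auto simp: cfun_def)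
qed

lemma cfun_in_Kgrp [simp]: "cfun H a t \<in> carrier (Kgrp H a)"
proof (cases "\<exists>i::nat. i > 0 \<and> t = 2 ^ i")
  case True
  then show ?thesis using cfun_power_of_two belt_in_Kgrp by auto
next
  case False
  then have "cfun H a t = (if t = 1 then zelt H else \<one>\<^bsub>HWrZ H\<^esub>)"
    unfolding cfun_def by (simp only: restrict_UNIV if_False)
  then show ?thesis using zelt_in_Kgrp by simp
qed

lemma cfun_in_HWrZ [simp]: "cfun H a t \<in> carrier (HWrZ H)"
  using carrier_Kgrp_subset by auto

sublocale KZ: group "KWrS H a" by (rule group_wreath[OF K.is_group group_integer_group])

lemma celt_in_carrier: "celt H a \<in> carrier (KWrS H a)"
  by (simp add: celt_def mem_carrier_wreath_int)

lemma selt_eq: "selt H a = (\<lambda>k. \<one>\<^bsub>HWrZ H\<^esub>, 1)"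
  by (simp add: selt_def restrict_UNIV)

lemma selt_in_carrier: "selt H a \<in> carrier (KWrS H a)"
  by (simp add: selt_eq mem_carrier_wreath_int)

lemma carrier_Ggrp: "carrier (Ggrp H a) = generate (KWrS H a) {celt H a, selt H a}"
  using celt_in_carrier selt_in_carrier
  by (simp add: Ggrp_def carrier_subgroup_generated Int_absorb1)

lemma subgroup_Ggrp: "subgroup (carrier (Ggrp H a)) (KWrS H a)"
  unfolding carrier_Ggrp by (rule KZ.generate_is_subgroup) (simp add: celt_in_carrier selt_in_carrier)

lemma carrier_Ggrp_subset: "carrier (Ggrp H a) \<subseteq> carrier (KWrS H a)"
  using subgroup.subset[OF subgroup_Ggrp] .

lemma group_Ggrp: "group (Ggrp H a)"
  unfolding Ggrp_def by simp

lemma one_Ggrp: "\<one>\<^bsub>Ggrp H a\<^esub> = \<one>\<^bsub>KWrS H a\<^esub>"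
  by (simp add: Ggrp_def)

lemma celt_in_Ggrp: "celt H a \<in> carrier (Ggrp H a)"
  unfolding carrier_Ggrp by (rule generate.incl) simp

lemma selt_in_Ggrp: "selt H a \<in> carrier (Ggrp H a)"
  unfolding carrier_Ggrp by (rule generate.incl) simp

lemma exp_of_derived_Ggrp:
  "(derived (Ggrp H a) ^^ n) (carrier (Ggrp H a)) = (derived (KWrS H a) ^^ n) (carrier (Ggrp H a))"
  using KZ.exp_of_derived_consistent[OF subgroup_Ggrp order_refl]
  by (simp add: Ggrp_def subgroup_generated_def)

lemma exp_of_derived_Kgrp:
  "S \<subseteq> carrier (Kgrp H a) \<Longrightarrow> (derived (Kgrp H a) ^^ n) S = (derived (HWrZ H) ^^ n) S"
  by (subst Kgrp_eq) (rule HZ.exp_of_derived_consistent[OF subgroup_Kgrp])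

lemma exp_of_derived_Ggrp_subset_base:
  "(derived (KWrS H a) ^^ Suc (Suc n)) (carrier (Ggrp H a))
     \<subseteq> wreath_base (Kgrp H a) integer_group
          (wreath_base H integer_group ((derived H ^^ n) (carrier H)))"
proof -
  have "(derived (Kgrp H a) ^^ Suc n) (carrier (Kgrp H a))
          \<subseteq> wreath_base H integer_group ((derived H ^^ n) (carrier H))"
    unfolding exp_of_derived_Kgrp[OF order_refl]
    by (rule exp_of_derived_wreath_subset_base[OF group_H abelian_integer_group carrier_Kgrp_subset])
  moreover have "(derived (KWrS H a) ^^ Suc (Suc n)) (carrier (Ggrp H a))
          \<subseteq> wreath_base (Kgrp H a) integer_group ((derived (Kgrp H a) ^^ Suc n) (carrier (Kgrp H a)))"
    by (rule exp_of_derived_wreath_subset_base[OF K.is_group abelian_integer_group carrier_Ggrp_subset])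
  ultimately show ?thesis
    by (meson order_trans wreath_base_mono)
qed

lemma exp_of_derived_Ggrp_trivial:
  assumes "(derived H ^^ l) (carrier H) = {\<one>\<^bsub>H\<^esub>}"
  shows "(derived (KWrS H a) ^^ Suc (Suc l)) (carrier (Ggrp H a)) = {\<one>\<^bsub>KWrS H a\<^esub>}"
proof
  have "wreath_base H integer_group {\<one>\<^bsub>H\<^esub>} \<subseteq> {\<one>\<^bsub>Kgrp H a\<^esub>}"
    using wreath_base_one_subset by simp
  then have "wreath_base (Kgrp H a) integer_group (wreath_base H integer_group {\<one>\<^bsub>H\<^esub>})
               \<subseteq> {\<one>\<^bsub>KWrS H a\<^esub>}"
    using wreath_base_mono wreath_base_one_subset[of "Kgrp H a"] by blast
  then show "(derived (KWrS H a) ^^ Suc (Suc l)) (carrier (Ggrp H a)) \<subseteq> {\<one>\<^bsub>KWrS H a\<^esub>}"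
    using exp_of_derived_Ggrp_subset_base[of l] assms by simp
  show "{\<one>\<^bsub>KWrS H a\<^esub>} \<subseteq> (derived (KWrS H a) ^^ Suc (Suc l)) (carrier (Ggrp H a))"
    using subgroup.one_closed[OF KZ.exp_of_derived_is_subgroup[OF subgroup_Ggrp]] by blast
qed

lemma shift_in_Ggrp: "(\<lambda>t. \<one>\<^bsub>HWrZ H\<^esub>, int n) \<in> carrier (Ggrp H a)"
proof (induction n)
  case 0
  show ?case using subgroup.one_closed[OF subgroup_Ggrp] by (simp add: wreath_int_one)
next
  case (Suc n)
  then have "(\<lambda>t. \<one>\<^bsub>HWrZ H\<^esub>, int n) \<otimes>\<^bsub>KWrS H a\<^esub> selt H a \<in> carrier (Ggrp H a)"
    using selt_in_Ggrp subgroup.m_closed[OF subgroup_Ggrp] by blast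
  then show ?case by (simp add: selt_eq wreath_int_mult[where A = "Kgrp H a"] add.commute)
qed

lemma shifted_cfun_in_Ggrp:
  assumes "k \<ge> 0"
  shows "(\<lambda>t. cfun H a (t + k), 0) \<in> carrier (Ggrp H a)"
proof -
  obtain n where k: "k = int n" using assms nonneg_eq_int by blast
  let ?s = "(\<lambda>t. \<one>\<^bsub>HWrZ H\<^esub>, int n)"
  have "?s \<otimes>\<^bsub>KWrS H a\<^esub> celt H a \<otimes>\<^bsub>KWrS H a\<^esub> inv\<^bsub>KWrS H a\<^esub> ?s \<in> carrier (Ggrp H a)"
    using shift_in_Ggrp celt_in_Ggrp subgroup.m_closed[OF subgroup_Ggrp]
      subgroup.m_inv_closed[OF subgroup_Ggrp] by blast
  moreover have "?s \<in> carrier (KWrS H a)"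
    using shift_in_Ggrp carrier_Ggrp_subset by blast
  ultimately show ?thesis
    by (simp add: wreath_int_mult[where A = "Kgrp H a"] inv_wreath_int[OF K.is_group] celt_def k)
qed

lemma commutator_selt_celt:
  "commutator (KWrS H a) (selt H a) (celt H a)
     = (\<lambda>t. cfun H a (t + 1) \<otimes>\<^bsub>HWrZ H\<^esub> inv\<^bsub>HWrZ H\<^esub> cfun H a t, 0)"
  using celt_in_carrier selt_in_carrier
  by (simp add: commutator_def wreath_int_mult[where A = "Kgrp H a"]
      inv_wreath_int[OF K.is_group] selt_eq celt_def)

lemma commutator_celt_shifted_cfun:
  "commutator (KWrS H a) (celt H a) (\<lambda>t. cfun H a (t + k), 0)
     = (\<lambda>t. commutator (HWrZ H) (cfun H a t) (cfun H a (t + k)), 0)"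
  using commutator_wreath_base[OF K.is_group group_integer_group celt_in_carrier, of "(\<lambda>t. cfun H a (t + k), 0)"]
  by (simp add: celt_def mem_carrier_wreath_int restrict_UNIV commutator_def)

lemma eval_commutator_zelt_belt:
  assumes "i \<ge> 1"
  shows "fst (commutator (HWrZ H) (commutator (HWrZ H) (zelt H) (belt H a i))
                (belt H a 1 \<otimes>\<^bsub>HWrZ H\<^esub> inv\<^bsub>HWrZ H\<^esub> zelt H)) 0 = a i"
proof -
  have "commutator (HWrZ H) (zelt H) (belt H a i) = (\<lambda>u. if u = 0 then a i else \<one>\<^bsub>H\<^esub>, 0)"
    using a_in_carrier[OF assms]
    by (auto simp: commutator_def wreath_int_mult inv_wreath_int[OF group_H] zelt_eq belt_eq mem_carrier_wreath_int)
  moreover have "belt H a 1 \<otimes>\<^bsub>HWrZ H\<^esub> inv\<^bsub>HWrZ H\<^esub> zelt H = (\<lambda>u. if u > 0 then a 1 else \<one>\<^bsub>H\<^esub>, -1)"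
    using a_in_carrier[of 1]
    by (auto simp: wreath_int_mult inv_wreath_int[OF group_H] zelt_eq belt_eq mem_carrier_wreath_int)
  ultimately show ?thesis
    using a_in_carrier[OF assms] a_in_carrier[of 1]
    by (simp add: commutator_def wreath_int_mult inv_wreath_int[OF group_H] mem_carrier_wreath_int)
qed

lemma derived_Ggrp_subset_base:
  "derived (KWrS H a) (carrier (Ggrp H a)) \<subseteq> wreath_base (Kgrp H a) integer_group (carrier (Kgrp H a))"
  by (rule derived_wreath_subset_base[OF K.is_group abelian_integer_group carrier_Ggrp_subset])

lemma eval_derived_Ggrp_subset:
  "(\<lambda>p. fst p 1) ` derived (KWrS H a) (carrier (Ggrp H a)) \<subseteq> carrier (Kgrp H a)"
  using derived_Ggrp_subset_base by (auto simp: wreath_base_def)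

lemma derived_eval_derived_Ggrp_subset_base:
  "derived (HWrZ H) ((\<lambda>p. fst p 1) ` derived (KWrS H a) (carrier (Ggrp H a)))
     \<subseteq> wreath_base H integer_group (carrier H)"
  using eval_derived_Ggrp_subset carrier_Kgrp_subset
  by (intro derived_wreath_subset_base[OF group_H abelian_integer_group]) auto

lemma a_in_eval_derived_eval_derived_Ggrp:
  assumes "i \<ge> 1"
  shows "a i \<in> (\<lambda>q. fst q 0) `
           derived (HWrZ H) ((\<lambda>p. fst p 1) ` derived (KWrS H a) (carrier (Ggrp H a)))"
proof -
  let ?x = "commutator (KWrS H a) (celt H a) (\<lambda>t. cfun H a (t + (2 ^ i - 1)), 0)"
  let ?y = "commutator (KWrS H a) (selt H a) (celt H a)"
  have xy: "?x \<in> derived (KWrS H a) (carrier (Ggrp H a))" "?y \<in> derived (KWrS H a) (carrier (Ggrp H a))"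
    by (auto intro!: commutator_in_derived celt_in_Ggrp selt_in_Ggrp shifted_cfun_in_Ggrp)
  have "commutator (HWrZ H) (fst ?x 1) (fst ?y 1)
          \<in> derived (HWrZ H) ((\<lambda>p. fst p 1) ` derived (KWrS H a) (carrier (Ggrp H a)))"
    using imageI[OF xy(1)] imageI[OF xy(2)] by (rule commutator_in_derived)
  moreover have "fst ?x 1 = commutator (HWrZ H) (zelt H) (belt H a i)"
    using assms by (simp add: commutator_celt_shifted_cfun cfun_1 cfun_power_of_two)
  moreover have "fst ?y 1 = belt H a 1 \<otimes>\<^bsub>HWrZ H\<^esub> inv\<^bsub>HWrZ H\<^esub> zelt H"
    using cfun_power_of_two[of 1] by (simp add: commutator_selt_celt cfun_1)
  ultimately have "commutator (HWrZ H) (commutator (HWrZ H) (zelt H) (belt H a i))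
                     (belt H a 1 \<otimes>\<^bsub>HWrZ H\<^esub> inv\<^bsub>HWrZ H\<^esub> zelt H)
                   \<in> derived (HWrZ H) ((\<lambda>p. fst p 1) ` derived (KWrS H a) (carrier (Ggrp H a)))"
    by simp
  then show ?thesis
    using eval_commutator_zelt_belt[OF assms, symmetric] by (rule rev_image_eqI)
qed

lemma eval_derived_eval_derived_Ggrp:
  assumes "generate H (a ` {1..}) = carrier H"
  shows "(\<lambda>q. fst q 0) ` derived (HWrZ H) ((\<lambda>p. fst p 1) ` derived (KWrS H a) (carrier (Ggrp H a)))
           = carrier H"
    (is "?ev0 ` ?E = _")
proof
  interpret ev0: group_hom "(HWrZ H)\<lparr>carrier := wreath_base H integer_group (carrier H)\<rparr>" H ?ev0
    by (rule group_hom_wreath_base_eval[OF group_H group_integer_group]) simp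
  have "subgroup ?E ((HWrZ H)\<lparr>carrier := wreath_base H integer_group (carrier H)\<rparr>)"
    using eval_derived_Ggrp_subset carrier_Kgrp_subset derived_eval_derived_Ggrp_subset_base
    by (intro HZ.subgroup_incl HZ.derived_is_subgroup
        subgroup_wreath_base[OF group_H group_integer_group H.subgroup_self]) auto
  then have "subgroup (?ev0 ` ?E) H"
    by (rule ev0.subgroup_img_is_subgroup)
  moreover have "a ` {1..} \<subseteq> ?ev0 ` ?E"
    using a_in_eval_derived_eval_derived_Ggrp by auto
  ultimately show "carrier H \<subseteq> ?ev0 ` ?E"
    using H.generate_subgroup_incl assms by blast
  show "?ev0 ` ?E \<subseteq> carrier H"
    using derived_eval_derived_Ggrp_subset_base by (auto simp: wreath_base_def)
qed

lemma eval_exp_of_derived_Ggrp: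
  assumes "generate H (a ` {1..}) = carrier H"
  shows "(\<lambda>p. fst (fst p 1) 0) ` (derived (KWrS H a) ^^ Suc (Suc n)) (carrier (Ggrp H a))
           = (derived H ^^ n) (carrier H)"
proof -
  let ?D = "derived (KWrS H a) (carrier (Ggrp H a))"
  let ?E = "derived (HWrZ H) ((\<lambda>p. fst p 1) ` ?D)"
  have "(\<lambda>p. fst (fst p 1) 0) ` (derived (KWrS H a) ^^ Suc (Suc n)) (carrier (Ggrp H a))
          = (\<lambda>q. fst q 0) ` (\<lambda>p. fst p 1) ` (derived (KWrS H a) ^^ Suc n) ?D"
    by (simp only: image_image funpow_Suc_right comp_def)
  also have "\<dots> = (\<lambda>q. fst q 0) ` (derived (Kgrp H a) ^^ Suc n) ((\<lambda>p. fst p 1) ` ?D)"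
    by (subst exp_of_derived_wreath_base_eval[OF K.is_group group_integer_group _ derived_Ggrp_subset_base])
      simp_all
  also have "\<dots> = (\<lambda>q. fst q 0) ` (derived (HWrZ H) ^^ n) ?E"
    by (subst exp_of_derived_Kgrp[OF eval_derived_Ggrp_subset]) (simp only: funpow_Suc_right comp_def)
  also have "\<dots> = (derived H ^^ n) ((\<lambda>q. fst q 0) ` ?E)"
    by (rule exp_of_derived_wreath_base_eval[OF group_H group_integer_group _
          derived_eval_derived_Ggrp_subset_base]) simp
  also have "\<dots> = (derived H ^^ n) (carrier H)"
    by (simp only: eval_derived_eval_derived_Ggrp[OF assms])
  finally show ?thesis .
qed

lemma commutator_selt_celt_nontrivial:
  "commutator (KWrS H a) (selt H a) (celt H a) \<noteq> \<one>\<^bsub>KWrS H a\<^esub>"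
proof -
  have "fst (commutator (KWrS H a) (selt H a) (celt H a)) 0 = zelt H"
    using Kgrp_generators_in_carrier by (simp add: commutator_selt_celt cfun_0 cfun_1)
  then show ?thesis
    by (auto simp: zelt_eq wreath_int_one)
qed

lemma exp_of_derived_Ggrp_nontrivial:
  assumes "generate H (a ` {1..}) = carrier H"
    and "\<forall>m<l. (derived H ^^ m) (carrier H) \<noteq> {\<one>\<^bsub>H\<^esub>}"
  shows "(derived (KWrS H a) ^^ Suc l) (carrier (Ggrp H a)) \<noteq> {\<one>\<^bsub>KWrS H a\<^esub>}"
proof (cases l)
  case 0
  have "commutator (KWrS H a) (selt H a) (celt H a) \<in> derived (KWrS H a) (carrier (Ggrp H a))"
    by (rule commutator_in_derived[OF selt_in_Ggrp celt_in_Ggrp])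
  then show ?thesis
    using 0 commutator_selt_celt_nontrivial by auto
next
  case (Suc k)
  then have "(derived H ^^ k) (carrier H) \<noteq> {\<one>\<^bsub>H\<^esub>}"
    using assms(2) by simp
  then show ?thesis
    using eval_exp_of_derived_Ggrp[OF assms(1), of k] Suc by (auto simp: wreath_int_one)
qed

end

theorem corollary2:
  fixes H :: "('h, 'm) monoid_scheme" and a :: "nat \<Rightarrow> 'h" and l :: nat
  assumes "group H"
    and "\<And>i. i \<ge> 1 \<Longrightarrow> a i \<in> carrier H"
    and "generate H (a ` {1..}) = carrier H"
    and "solvable_length H l"
  shows "group (Ggrp H a) \<and> solvable_length (Ggrp H a) (l + 2)"
proof -
  interpret wreath_tower H a by (rule wreath_tower.intro[OF assms(1,2)])
  let ?D = "\<lambda>m. (derived (KWrS H a) ^^ m) (carrier (Ggrp H a))"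
  have "?D (Suc l) \<noteq> {\<one>\<^bsub>KWrS H a\<^esub>}"
    using exp_of_derived_Ggrp_nontrivial assms(3,4) by (simp add: solvable_length_def)
  then have "?D m \<noteq> {\<one>\<^bsub>KWrS H a\<^esub>}" if "m < l + 2" for m
    using that KZ.exp_of_derived_antimono[OF subgroup_Ggrp, of m "Suc l"]
      subgroup.one_closed[OF KZ.exp_of_derived_is_subgroup[OF subgroup_Ggrp]]
    by fastforce
  moreover have "?D (l + 2) = {\<one>\<^bsub>KWrS H a\<^esub>}"
    using exp_of_derived_Ggrp_trivial assms(4) by (simp add: solvable_length_def)
  ultimately show ?thesis
    unfolding solvable_length_def exp_of_derived_Ggrp one_Ggrp using group_Ggrp by blast
qed

end
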